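(* Let $N=2^h$ with $h\ge 2$, $\Delta,\varepsilon>0$, $\sigma^2=2\Delta^2/\varepsilon^2$ and $V(N)=2(\log_2N-1)$. Consider the binary tree mechanism $\mathcal{T}_{N,\Delta,\varepsilon}$ applied to a sequence $(y_t)_{t\ge1}$ of nonnegative reals, and let $I$ be a set of consecutive indices. (1) If $|I|\le N/2$, there is an estimator $\hat S(I)$, equal to a sum of released noisy tree-node values, with $\mathbb{E}[\hat S(I)]=\sum_{t\in I}y_t$ and $\mathrm{Var}[\hat S(I)]\le V(N)\,\sigma^2$. (2) If $|I|>N/2$, write $|I|=kN/2+R$ with integers $k\ge1$ and $0\le R<N/2$. Then there is such an estimator, equal to a sum of released noisy values (possibly from several containers), with $\mathbb{E}[\hat S(I)]=\sum_{t\in I}y_t$ and $\mathrm{Var}[\hat S(I)]\le (k+V(N))\,\sigma^2$.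
   Context: Binary tree mechanism with shadow releases $\mathcal{T}_{N,\Delta,\varepsilon}$ ($N=2^h$) on an input sequence $(y_t)_{t\ge1}$: indices are partitioned into containers $C_k=\{(k-1)N+1,\dots,kN\}$, $k=1,2,\dots$. For each container, build a complete binary tree $\mathcal{B}_N$ whose leaves are the indices of $C_k$ in order; a node $v$ at depth $d$ (root at depth $0$) corresponds to a block of $2^{h-d}$ consecutive leaves, and $\mathrm{sum}(v)=\sum_{t\in\mathrm{leaves}(v)}y_t$. The mechanism releases $\tilde s(v)=\mathrm{sum}(v)+\eta_v$ for every node $v$ of every container's tree, and for each container $k$ one shadow release $\sum_{t=(k-1)N+N/2+1}^{kN}y_t+\eta'_k$, where all $\eta_v,\eta'_k$ are independent $\mathrm{Lap}(\Delta/\varepsilon)$ random variables (each of variance $2\Delta^2/\varepsilon^2$). *)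

theory Defs
  imports "HOL-Probability.Probability"
begin

text \<open>Labels of released values of the binary tree mechanism with shadow releases
  (N = 2^h).  TNode k d j: node at depth d (root depth 0), position j (0 \<le> j < 2^d,
  left to right) in the tree of container k (k \<ge> 1).  Shadow k: the shadow release
  of container k.\<close>
datatype rlabel = TNode nat nat nat | Shadow nat

fun valid_label :: "nat \<Rightarrow> rlabel \<Rightarrow> bool" where
  "valid_label h (TNode k d j) = (1 \<le> k \<and> d \<le> h \<and> j < 2 ^ d)"
| "valid_label h (Shadow k) = (1 \<le> k)"

text \<open>Indices summed by a released value (container C_k = {(k-1)N+1..kN}).\<close>
fun leaves :: "nat \<Rightarrow> rlabel \<Rightarrow> nat set" where
  "leaves h (TNode k d j) =
     {(k - 1) * 2 ^ h + j * 2 ^ (h - d) + 1 .. (k - 1) * 2 ^ h + (j + 1) * 2 ^ (h - d)}"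
| "leaves h (Shadow k) = {(k - 1) * 2 ^ h + 2 ^ h div 2 + 1 .. k * 2 ^ h}"

definition true_value :: "(nat \<Rightarrow> real) \<Rightarrow> nat \<Rightarrow> rlabel \<Rightarrow> real" where
  "true_value y h l = (\<Sum>t\<in>leaves h l. y t)"

definition released :: "(nat \<Rightarrow> real) \<Rightarrow> nat \<Rightarrow> (rlabel \<Rightarrow> 'a \<Rightarrow> real) \<Rightarrow> rlabel \<Rightarrow> 'a \<Rightarrow> real" where
  "released y h \<eta> l \<omega> = true_value y h l + \<eta> l \<omega>"

definition laplace_density :: "real \<Rightarrow> real \<Rightarrow> real" where
  "laplace_density b x = exp (- \<bar>x\<bar> / b) / (2 * b)"

end

theory Submission
  imports Defs
begin

text \<open>
  An interval of length at most (k + 1) 2^g is a disjoint union of at most k + 2g aligned dyadic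
  blocks of length at most 2^g: at most g blocks for each ragged end (the binary expansion of its
  length) and at most k full blocks in between.  With g = h - 1 every such block is a node of a
  container tree, so the sum of the released values of these nodes is an unbiased estimator, and as
  the Laplace noises are independent, centred, with variance 2 b^2, its variance is the number of
  nodes times 2 b^2.
\<close>

lemma laplace_density_nonneg: "b > 0 \<Longrightarrow> 0 \<le> laplace_density b x"
  by (simp add: laplace_density_def)

text \<open>On [0, \<infinity>) the Laplace density is half the exponential density \<open>erlang_density 0\<close>.\<close>

lemma has_bochner_integral_laplace_moment_Ici:
  assumes "b > 0"
  shows "has_bochner_integral lborel
           (\<lambda>x. indicator {0..} x *\<^sub>R (laplace_density b x * x ^ i)) (fact i * b ^ i / 2)"
proof -
  have "has_bochner_integral lborel (\<lambda>x. erlang_density 0 (1 / b) x * x ^ i) (fact i * b ^ i)"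
  proof (rule has_bochner_integral_nn_integral)
    show "(\<integral>\<^sup>+ x. ennreal (erlang_density 0 (1 / b) x * x ^ i) \<partial>lborel) =
          ennreal (fact i * b ^ i)"
      using nn_integral_erlang_ith_moment[of "1 / b" 0 i] assms by (simp add: power_divide)
  qed (use assms in \<open>auto simp: erlang_density_def\<close>)
  then have "has_bochner_integral lborel
               (\<lambda>x. erlang_density 0 (1 / b) x * x ^ i / 2) (fact i * b ^ i / 2)"
    by (rule has_bochner_integral_divide_zero)
  moreover have "erlang_density 0 (1 / b) x * x ^ i / 2 =
                 indicator {0..} x *\<^sub>R (laplace_density b x * x ^ i)" for x
    using assms by (auto simp: erlang_density_def laplace_density_def indicator_def)
  ultimately show ?thesis by simp
qed

lemma has_bochner_integral_laplace_mean:
  "b > 0 \<Longrightarrow> has_bochner_integral lborel (\<lambda>x. laplace_density b x * x) 0"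
  using has_bochner_integral_odd_function[OF has_bochner_integral_laplace_moment_Ici[of b 1]]
  by (simp add: laplace_density_def)

lemma has_bochner_integral_laplace_second_moment:
  "b > 0 \<Longrightarrow> has_bochner_integral lborel (\<lambda>x. laplace_density b x * x\<^sup>2) (2 * b\<^sup>2)"
  using has_bochner_integral_even_function[OF has_bochner_integral_laplace_moment_Ici[of b 2]]
  by (simp add: laplace_density_def)

lemma (in prob_space) laplace_distributed_moments:
  assumes "b > 0" and X: "distributed M lborel X (\<lambda>x. ennreal (laplace_density b x))"
  shows "has_bochner_integral M X 0" and "has_bochner_integral M (\<lambda>\<omega>. (X \<omega>)\<^sup>2) (2 * b\<^sup>2)"
proof -
  have transfer: "has_bochner_integral M (\<lambda>\<omega>. g (X \<omega>)) I"
    if "has_bochner_integral lborel (\<lambda>x. laplace_density b x * g x) I" "g \<in> borel_measurable borel"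
    for g :: "real \<Rightarrow> real" and I
    using that distributed_integrable[OF X, of g] distributed_integral[OF X, of g]
      laplace_density_nonneg[OF \<open>b > 0\<close>]
    by (simp add: has_bochner_integral_iff)
  show "has_bochner_integral M X 0"
    using transfer[of "\<lambda>x. x"] has_bochner_integral_laplace_mean[OF \<open>b > 0\<close>] by simp
  show "has_bochner_integral M (\<lambda>\<omega>. (X \<omega>)\<^sup>2) (2 * b\<^sup>2)"
    using transfer[of "\<lambda>x. x\<^sup>2"] has_bochner_integral_laplace_second_moment[OF \<open>b > 0\<close>] by simp
qed

lemma (in prob_space) expectation_variance_indep_centered_sum:
  fixes c :: "'i \<Rightarrow> real"
  assumes "finite L" and indep: "indep_vars (\<lambda>_. borel) \<eta> L"
    and centered: "\<And>l. l \<in> L \<Longrightarrow> has_bochner_integral M (\<eta> l) 0"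
    and second_moment: "\<And>l. l \<in> L \<Longrightarrow> has_bochner_integral M (\<lambda>\<omega>. (\<eta> l \<omega>)\<^sup>2) v"
  shows "expectation (\<lambda>\<omega>. \<Sum>l\<in>L. c l + \<eta> l \<omega>) = (\<Sum>l\<in>L. c l)"
    and "variance (\<lambda>\<omega>. \<Sum>l\<in>L. c l + \<eta> l \<omega>) = real (card L) * v"
proof -
  show mean: "expectation (\<lambda>\<omega>. \<Sum>l\<in>L. c l + \<eta> l \<omega>) = (\<Sum>l\<in>L. c l)"
    using centered by (simp add: has_bochner_integral_iff prob_space)
  have cross: "has_bochner_integral M (\<lambda>\<omega>. \<eta> i \<omega> * \<eta> j \<omega>) (if i = j then v else 0)"
    if "i \<in> L" "j \<in> L" for i j
  proof (cases "i = j")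
    case True
    then show ?thesis using second_moment[OF \<open>i \<in> L\<close>] by (simp add: power2_eq_square)
  next
    case False
    have "indep_vars (\<lambda>_. borel) \<eta> {i, j}"
      using indep_vars_subset[OF indep] that by simp
    moreover have "\<And>l. l \<in> {i, j} \<Longrightarrow> integrable M (\<eta> l)"
      using centered that by (auto simp: has_bochner_integral_iff)
    ultimately show ?thesis
      using indep_vars_lebesgue_integral[of "{i, j}" \<eta>] indep_vars_integrable[of "{i, j}" \<eta>]
        centered[OF \<open>i \<in> L\<close>] centered[OF \<open>j \<in> L\<close>] False
      by (simp add: has_bochner_integral_iff)
  qed
  have "variance (\<lambda>\<omega>. \<Sum>l\<in>L. c l + \<eta> l \<omega>) =
        expectation (\<lambda>\<omega>. \<Sum>i\<in>L. \<Sum>j\<in>L. \<eta> i \<omega> * \<eta> j \<omega>)"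
    unfolding mean by (simp add: sum.distrib power2_eq_square sum_product)
  also have "\<dots> = (\<Sum>i\<in>L. \<Sum>j\<in>L. if i = j then v else 0)"
    using cross by (simp add: has_bochner_integral_iff Bochner_Integration.integral_sum)
  also have "\<dots> = real (card L) * v"
    using \<open>finite L\<close> by simp
  finally show "variance (\<lambda>\<omega>. \<Sum>l\<in>L. c l + \<eta> l \<omega>) = real (card L) * v" .
qed

fun dyadic_block :: "nat \<times> nat \<Rightarrow> nat set" where
  "dyadic_block (e, q) = {q * 2 ^ e ..< (q + 1) * 2 ^ e}"

definition dyadic_decomposable :: "nat \<Rightarrow> nat \<Rightarrow> nat set \<Rightarrow> bool" where
  "dyadic_decomposable h m S \<longleftrightarrow>
     (\<exists>D. finite D \<and> card D \<le> m \<and> (\<forall>b\<in>D. fst b \<le> h) \<and>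
          disjoint_family_on dyadic_block D \<and> \<Union>(dyadic_block ` D) = S)"

lemma dyadic_decomposable_empty: "dyadic_decomposable h m {}"
  unfolding dyadic_decomposable_def by (intro exI[of _ "{}"]) (simp add: disjoint_family_on_def)

lemma dyadic_decomposable_block:
  "e \<le> h \<Longrightarrow> dyadic_decomposable h 1 {q * 2 ^ e ..< (q + 1) * 2 ^ e}"
  unfolding dyadic_decomposable_def
  by (intro exI[of _ "{(e, q)}"]) (simp add: disjoint_family_on_def)

lemma dyadic_decomposable_mono:
  "dyadic_decomposable h m S \<Longrightarrow> m \<le> m' \<Longrightarrow> dyadic_decomposable h m' S"
  unfolding dyadic_decomposable_def using le_trans by blast

lemma dyadic_decomposable_Un:
  assumes "dyadic_decomposable h m1 S1" "dyadic_decomposable h m2 S2" "S1 \<inter> S2 = {}"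
  shows "dyadic_decomposable h (m1 + m2) (S1 \<union> S2)"
proof -
  obtain D1 where D1: "finite D1" "card D1 \<le> m1" "\<forall>b\<in>D1. fst b \<le> h"
      "disjoint_family_on dyadic_block D1" "\<Union>(dyadic_block ` D1) = S1"
    using assms(1) unfolding dyadic_decomposable_def by blast
  obtain D2 where D2: "finite D2" "card D2 \<le> m2" "\<forall>b\<in>D2. fst b \<le> h"
      "disjoint_family_on dyadic_block D2" "\<Union>(dyadic_block ` D2) = S2"
    using assms(2) unfolding dyadic_decomposable_def by blast
  have "disjoint_family_on dyadic_block (D1 \<union> D2)"
    using D1(4,5) D2(4,5) assms(3) unfolding disjoint_family_on_def by blast
  moreover have "card (D1 \<union> D2) \<le> m1 + m2"
    using card_Un_le[of D1 D2] D1(2) D2(2) by linarith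
  ultimately show ?thesis
    unfolding dyadic_decomposable_def using D1 D2 by (intro exI[of _ "D1 \<union> D2"]) auto
qed

lemma dyadic_decomposable_concat:
  "dyadic_decomposable h m1 {r..<s} \<Longrightarrow> dyadic_decomposable h m2 {s..<t} \<Longrightarrow>
   r \<le> s \<Longrightarrow> s \<le> t \<Longrightarrow> dyadic_decomposable h (m1 + m2) {r..<t}"
  using dyadic_decomposable_Un[of h m1 "{r..<s}" m2 "{s..<t}"] by (simp add: ivl_disj_un_two(3))

lemma dyadic_decomposable_aligned_prefix:
  "g \<le> h \<Longrightarrow> c * 2 ^ g \<le> t \<Longrightarrow> t < (c + 1) * 2 ^ g \<Longrightarrow>
   dyadic_decomposable h g {c * 2 ^ g ..< t}"
proof (induction g arbitrary: c)
  case 0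
  then show ?case by (simp add: dyadic_decomposable_empty)
next
  case (Suc g)
  have start: "c * 2 ^ Suc g = (2 * c) * 2 ^ g" by simp
  show ?case
  proof (cases "t < (2 * c + 1) * 2 ^ g")
    case True
    have "dyadic_decomposable h g {(2 * c) * 2 ^ g ..< t}"
      by (rule Suc.IH) (use True Suc.prems in auto)
    then show ?thesis unfolding start by (rule dyadic_decomposable_mono) simp
  next
    case False
    have "dyadic_decomposable h (1 + g) {(2 * c) * 2 ^ g ..< t}"
      by (rule dyadic_decomposable_concat[OF dyadic_decomposable_block Suc.IH])
        (use False Suc.prems in \<open>auto simp: algebra_simps\<close>)
    then show ?thesis unfolding start by simp
  qed
qed

lemma dyadic_decomposable_aligned_suffix:
  "g \<le> h \<Longrightarrow> c * 2 ^ g < s \<Longrightarrow> s \<le> (c + 1) * 2 ^ g \<Longrightarrow>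
   dyadic_decomposable h g {s ..< (c + 1) * 2 ^ g}"
proof (induction g arbitrary: c)
  case 0
  then show ?case by (simp add: dyadic_decomposable_empty)
next
  case (Suc g)
  have stop: "(c + 1) * 2 ^ Suc g = (2 * c + 1 + 1) * 2 ^ g" by simp
  show ?case
  proof (cases "(2 * c + 1) * 2 ^ g < s")
    case True
    have "dyadic_decomposable h g {s ..< (2 * c + 1 + 1) * 2 ^ g}"
      by (rule Suc.IH) (use True Suc.prems in auto)
    then show ?thesis unfolding stop by (rule dyadic_decomposable_mono) simp
  next
    case False
    have "dyadic_decomposable h (g + 1) {s ..< (2 * c + 1 + 1) * 2 ^ g}"
      by (rule dyadic_decomposable_concat[OF Suc.IH dyadic_decomposable_block])
        (use False Suc.prems in \<open>auto simp: algebra_simps\<close>)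
    then show ?thesis unfolding stop by simp
  qed
qed

lemma dyadic_decomposable_aligned_prefix_le:
  assumes "g \<le> h" "c * 2 ^ g \<le> t" "t \<le> (c + 1) * 2 ^ g"
  shows "dyadic_decomposable h (max 1 g) {c * 2 ^ g ..< t}"
proof (cases "t = (c + 1) * 2 ^ g")
  case True
  have "dyadic_decomposable h 1 {c * 2 ^ g ..< (c + 1) * 2 ^ g}"
    using assms(1) by (rule dyadic_decomposable_block)
  then show ?thesis unfolding True by (rule dyadic_decomposable_mono) simp
next
  case False
  then show ?thesis
    using dyadic_decomposable_aligned_prefix[OF assms(1,2)] assms(3) dyadic_decomposable_mono by simp
qed

lemma dyadic_decomposable_aligned_suffix_le:
  assumes "g \<le> h" "c * 2 ^ g \<le> s" "s \<le> (c + 1) * 2 ^ g"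
  shows "dyadic_decomposable h (max 1 g) {s ..< (c + 1) * 2 ^ g}"
proof (cases "s = c * 2 ^ g")
  case True
  have "dyadic_decomposable h 1 {c * 2 ^ g ..< (c + 1) * 2 ^ g}"
    using assms(1) by (rule dyadic_decomposable_block)
  then show ?thesis unfolding True by (rule dyadic_decomposable_mono) simp
next
  case False
  then show ?thesis
    using dyadic_decomposable_aligned_suffix[OF assms(1) _ assms(3)] assms(2) dyadic_decomposable_mono
    by simp
qed

lemma dyadic_decomposable_within_block:
  "g \<le> h \<Longrightarrow> c * 2 ^ g \<le> s \<Longrightarrow> t \<le> (c + 1) * 2 ^ g \<Longrightarrow>
   dyadic_decomposable h (max 1 (2 * g)) {s ..< t}"
proof (induction g arbitrary: c)
  case 0
  then have "c \<le> s" "t \<le> c + 1" by simp_all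
  then consider "t \<le> s" | "s = c" "t = c + 1" by linarith
  then show ?case
    using dyadic_decomposable_empty dyadic_decomposable_block[of 0 h c] by cases auto
next
  case (Suc g)
  define mid where "mid = (2 * c + 1) * 2 ^ g"
  consider "t \<le> mid" | "mid \<le> s" | "s < mid" "mid < t" by linarith
  then show ?case
  proof cases
    case 1
    have "dyadic_decomposable h (max 1 (2 * g)) {s ..< t}"
      by (rule Suc.IH[of "2 * c"]) (use 1 Suc.prems in \<open>auto simp: mid_def\<close>)
    then show ?thesis by (rule dyadic_decomposable_mono) simp
  next
    case 2
    have "dyadic_decomposable h (max 1 (2 * g)) {s ..< t}"
      by (rule Suc.IH[of "2 * c + 1"]) (use 2 Suc.prems in \<open>auto simp: mid_def\<close>)
    then show ?thesis by (rule dyadic_decomposable_mono) simp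
  next
    case 3
    have "dyadic_decomposable h (max 1 g) {s ..< mid}"
      unfolding mid_def
      by (rule dyadic_decomposable_aligned_suffix_le) (use 3 Suc.prems in \<open>auto simp: mid_def\<close>)
    moreover have "dyadic_decomposable h (max 1 g) {mid ..< t}"
      unfolding mid_def
      by (rule dyadic_decomposable_aligned_prefix_le) (use 3 Suc.prems in \<open>auto simp: mid_def\<close>)
    ultimately have "dyadic_decomposable h (max 1 g + max 1 g) {s ..< t}"
      by (rule dyadic_decomposable_concat) (use 3 in auto)
    then show ?thesis by (rule dyadic_decomposable_mono) simp
  qed
qed

lemma dyadic_decomposable_from_aligned:
  "g \<le> h \<Longrightarrow> c * 2 ^ g \<le> t \<Longrightarrow> t < (c + q + 1) * 2 ^ g \<Longrightarrow>
   dyadic_decomposable h (q + g) {c * 2 ^ g ..< t}"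
proof (induction q arbitrary: c)
  case 0
  then show ?case using dyadic_decomposable_aligned_prefix by simp
next
  case (Suc q)
  show ?case
  proof (cases "t < (c + 1) * 2 ^ g")
    case True
    then show ?thesis
      using dyadic_decomposable_aligned_prefix[of g h c t] Suc.prems dyadic_decomposable_mono by simp
  next
    case False
    have "dyadic_decomposable h (1 + (q + g)) {c * 2 ^ g ..< t}"
      by (rule dyadic_decomposable_concat[OF dyadic_decomposable_block Suc.IH[of "c + 1"]])
        (use False Suc.prems in auto)
    then show ?thesis by simp
  qed
qed

lemma dyadic_decomposable_interval:
  assumes "1 \<le> g" "g \<le> h" "t \<le> s + (k + 1) * 2 ^ g"
  shows "dyadic_decomposable h (k + 2 * g) {s ..< t}"
proof -
  define c where "c = s div 2 ^ g"
  have s_bounds: "c * 2 ^ g \<le> s" "s < (c + 1) * 2 ^ g"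
    using dividend_less_div_times[of "2 ^ g" s] by (simp_all add: c_def)
  show ?thesis
  proof (cases "t \<le> (c + 1) * 2 ^ g")
    case True
    then show ?thesis
      using dyadic_decomposable_within_block[OF assms(2) s_bounds(1) True] assms(1)
        dyadic_decomposable_mono by simp
  next
    case False
    have "dyadic_decomposable h (max 1 g) {s ..< (c + 1) * 2 ^ g}"
      using dyadic_decomposable_aligned_suffix_le[OF assms(2) s_bounds(1)] s_bounds(2) by simp
    moreover have "dyadic_decomposable h (k + g) {(c + 1) * 2 ^ g ..< t}"
      by (rule dyadic_decomposable_from_aligned)
        (use assms(2,3) False s_bounds in \<open>auto simp: algebra_simps\<close>)
    ultimately have "dyadic_decomposable h (max 1 g + (k + g)) {s ..< t}"
      by (rule dyadic_decomposable_concat) (use False s_bounds in auto)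
    then show ?thesis by (rule dyadic_decomposable_mono) (use assms(1) in \<open>simp add: max_def\<close>)
  qed
qed

text \<open>The q-th block of length 2^e is the node at depth h - e of container q div 2^(h-e) + 1;
  containers are numbered from 1, but blocks and their elements from 0.\<close>

fun tree_node_of_block :: "nat \<Rightarrow> nat \<times> nat \<Rightarrow> rlabel" where
  "tree_node_of_block h (e, q) = TNode (q div 2 ^ (h - e) + 1) (h - e) (q mod 2 ^ (h - e))"

lemma valid_label_tree_node_of_block: "fst b \<le> h \<Longrightarrow> valid_label h (tree_node_of_block h b)"
  by (cases b) simp

lemma leaves_tree_node_of_block:
  assumes "fst b \<le> h"
  shows "leaves h (tree_node_of_block h b) = Suc ` dyadic_block b"
proof -
  obtain e q where b: "b = (e, q)" by (cases b)
  define P :: nat where "P = 2 ^ (h - e)"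
  define Q :: nat where "Q = 2 ^ e"
  have "(2::nat) ^ h = P * Q" "h - (h - e) = e"
    using assms b by (simp_all add: P_def Q_def flip: power_add)
  moreover have "q div P * (P * Q) + q mod P * Q = q * Q"
    by (metis div_mult_mod_eq distrib_right mult.assoc mult.commute)
  ultimately have "leaves h (tree_node_of_block h b) = {q * Q + 1 .. q * Q + Q}"
    by (simp add: b P_def[symmetric] Q_def[symmetric] algebra_simps)
  also have "\<dots> = Suc ` dyadic_block b"
    by (simp add: b Q_def atLeastLessThanSuc_atLeastAtMost algebra_simps)
  finally show ?thesis .
qed

lemma inj_on_tree_node_of_block: "inj_on (tree_node_of_block h) {b. fst b \<le> h}"
proof
  fix b b' assume "b \<in> {b. fst b \<le> h}" "b' \<in> {b. fst b \<le> h}"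
    and eq: "tree_node_of_block h b = tree_node_of_block h b'"
  obtain e q e' q' where b: "b = (e, q)" and b': "b' = (e', q')" by fastforce
  have "e = e'"
    using eq \<open>b \<in> _\<close> \<open>b' \<in> _\<close> by (simp add: b b') arith
  moreover have "q div 2 ^ (h - e) = q' div 2 ^ (h - e)" "q mod 2 ^ (h - e) = q' mod 2 ^ (h - e)"
    using eq \<open>e = e'\<close> by (simp_all add: b b')
  then have "q = q'" by (metis div_mult_mod_eq)
  ultimately show "b = b'" by (simp add: b b')
qed

lemma expectation_variance_released_sum:
  fixes y :: "nat \<Rightarrow> real" and \<eta> :: "rlabel \<Rightarrow> 'a \<Rightarrow> real"
  assumes "prob_space M" and indep: "prob_space.indep_vars M (\<lambda>_. borel) \<eta> {l. valid_label h l}"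
    and laplace: "\<forall>l. valid_label h l \<longrightarrow> distributed M lborel (\<eta> l) (\<lambda>x. ennreal (laplace_density b x))"
    and "b > 0" and "finite L" and "L \<subseteq> {l. valid_label h l}"
  shows "prob_space.expectation M (\<lambda>\<omega>. \<Sum>l\<in>L. released y h \<eta> l \<omega>) = (\<Sum>l\<in>L. true_value y h l)"
    and "prob_space.variance M (\<lambda>\<omega>. \<Sum>l\<in>L. released y h \<eta> l \<omega>) = real (card L) * (2 * b\<^sup>2)"
proof -
  interpret prob_space M by fact
  have "indep_vars (\<lambda>_. borel) \<eta> L"
    using indep_vars_subset[OF indep \<open>L \<subseteq> _\<close>] .
  moreover have "has_bochner_integral M (\<eta> l) 0"
    and "has_bochner_integral M (\<lambda>\<omega>. (\<eta> l \<omega>)\<^sup>2) (2 * b\<^sup>2)" if "l \<in> L" for l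
    using laplace_distributed_moments[OF \<open>b > 0\<close>] laplace \<open>L \<subseteq> _\<close> that by auto
  ultimately show "expectation (\<lambda>\<omega>. \<Sum>l\<in>L. released y h \<eta> l \<omega>) = (\<Sum>l\<in>L. true_value y h l)"
    and "variance (\<lambda>\<omega>. \<Sum>l\<in>L. released y h \<eta> l \<omega>) = real (card L) * (2 * b\<^sup>2)"
    using expectation_variance_indep_centered_sum[OF \<open>finite L\<close>, of \<eta> "2 * b\<^sup>2" "true_value y h"]
    by (simp_all add: released_def)
qed

lemma unbiased_estimator_of_dyadic_decomposition:
  fixes y :: "nat \<Rightarrow> real" and \<eta> :: "rlabel \<Rightarrow> 'a \<Rightarrow> real"
  assumes "prob_space M" and "prob_space.indep_vars M (\<lambda>_. borel) \<eta> {l. valid_label h l}"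
    and "\<forall>l. valid_label h l \<longrightarrow> distributed M lborel (\<eta> l) (\<lambda>x. ennreal (laplace_density b x))"
    and "b > 0" and "a \<ge> 1" and decomp: "dyadic_decomposable h m {a - 1 ..< a - 1 + n}"
  shows "\<exists>L. finite L \<and> L \<subseteq> {l. valid_label h l} \<and>
           prob_space.expectation M (\<lambda>\<omega>. \<Sum>l\<in>L. released y h \<eta> l \<omega>) = (\<Sum>t\<in>{a..<a+n}. y t) \<and>
           prob_space.variance M (\<lambda>\<omega>. \<Sum>l\<in>L. released y h \<eta> l \<omega>) \<le> real m * (2 * b\<^sup>2)"
proof -
  obtain D where D: "finite D" "card D \<le> m" "\<forall>b\<in>D. fst b \<le> h"
      "disjoint_family_on dyadic_block D" "\<Union>(dyadic_block ` D) = {a - 1 ..< a - 1 + n}"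
    using decomp unfolding dyadic_decomposable_def by blast
  define L where "L = tree_node_of_block h ` D"
  have inj: "inj_on (tree_node_of_block h) D"
    using inj_on_subset[OF inj_on_tree_node_of_block] D(3) by blast
  have L: "finite L" "L \<subseteq> {l. valid_label h l}" "card L \<le> m"
    using D(1-3) card_image[OF inj] valid_label_tree_node_of_block by (auto simp: L_def)
  have "(\<Sum>l\<in>L. true_value y h l) = (\<Sum>b\<in>D. \<Sum>t\<in>dyadic_block b. y (Suc t))"
    unfolding L_def using D(3)
    by (simp add: sum.reindex[OF inj] true_value_def leaves_tree_node_of_block sum.reindex)
  also have "\<dots> = (\<Sum>t\<in>{a - 1 ..< a - 1 + n}. y (Suc t))"
    unfolding D(5)[symmetric]
    by (rule sum.UNION_disjoint[symmetric]) (use D(1,4) in \<open>auto simp: disjoint_family_on_def\<close>)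
  also have "\<dots> = (\<Sum>t\<in>{a..<a+n}. y t)"
    using \<open>a \<ge> 1\<close> sum.shift_bounds_Suc_ivl[of y "a - 1" "a - 1 + n"] by simp
  finally have "(\<Sum>l\<in>L. true_value y h l) = (\<Sum>t\<in>{a..<a+n}. y t)" .
  moreover have "real (card L) * (2 * b\<^sup>2) \<le> real m * (2 * b\<^sup>2)"
    using L(3) by (simp add: mult_right_mono)
  ultimately show ?thesis
    using expectation_variance_released_sum[OF assms(1-4) L(1,2), of y] L(1,2) by auto
qed

theorem mainTheorem3:
  fixes h :: nat and \<Delta> \<epsilon> :: real and y :: "nat \<Rightarrow> real" and a n :: nat
    and M :: "'a measure" and \<eta> :: "rlabel \<Rightarrow> 'a \<Rightarrow> real"
  assumes "h \<ge> 2" and "\<Delta> > 0" and "\<epsilon> > 0"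
    and "\<forall>t. 0 \<le> y t"
    and "a \<ge> 1"
    and "prob_space M"
    and "prob_space.indep_vars M (\<lambda>_. borel) \<eta> {l. valid_label h l}"
    and "\<forall>l. valid_label h l \<longrightarrow>
           distributed M lborel (\<eta> l) (\<lambda>x. ennreal (laplace_density (\<Delta> / \<epsilon>) x))"
  shows "(n \<le> 2 ^ h div 2 \<longrightarrow>
            (\<exists>L. finite L \<and> L \<subseteq> {l. valid_label h l} \<and>
               prob_space.expectation M (\<lambda>\<omega>. \<Sum>l\<in>L. released y h \<eta> l \<omega>) = (\<Sum>t\<in>{a..<a+n}. y t) \<and>
               prob_space.variance M (\<lambda>\<omega>. \<Sum>l\<in>L. released y h \<eta> l \<omega>)
                 \<le> (2 * (log 2 (2 ^ h) - 1)) * (2 * \<Delta>\<^sup>2 / \<epsilon>\<^sup>2)))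
       \<and> (n > 2 ^ h div 2 \<longrightarrow>
            (\<forall>k R :: nat. n = k * (2 ^ h div 2) + R \<longrightarrow> 1 \<le> k \<longrightarrow> R < 2 ^ h div 2 \<longrightarrow>
              (\<exists>L. finite L \<and> L \<subseteq> {l. valid_label h l} \<and>
                 prob_space.expectation M (\<lambda>\<omega>. \<Sum>l\<in>L. released y h \<eta> l \<omega>) = (\<Sum>t\<in>{a..<a+n}. y t) \<and>
                 prob_space.variance M (\<lambda>\<omega>. \<Sum>l\<in>L. released y h \<eta> l \<omega>)
                   \<le> (real k + 2 * (log 2 (2 ^ h) - 1)) * (2 * \<Delta>\<^sup>2 / \<epsilon>\<^sup>2))))"
proof -
  define g where "g = h - 1"
  have g: "1 \<le> g" "g \<le> h" and half: "(2::nat) ^ h div 2 = 2 ^ g"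
    using \<open>h \<ge> 2\<close> power_Suc[of "2::nat" g] by (auto simp: g_def simp del: power_Suc)
  have levels: "2 * (log 2 (2 ^ h) - 1) = real (2 * g)"
    using \<open>h \<ge> 2\<close> by (simp add: g_def of_nat_diff)
  have "2 * (\<Delta> / \<epsilon>)\<^sup>2 = 2 * \<Delta>\<^sup>2 / \<epsilon>\<^sup>2"
    by (simp add: power_divide)
  then have estimator: "\<exists>L. finite L \<and> L \<subseteq> {l. valid_label h l} \<and>
      prob_space.expectation M (\<lambda>\<omega>. \<Sum>l\<in>L. released y h \<eta> l \<omega>) = (\<Sum>t\<in>{a..<a+n}. y t) \<and>
      prob_space.variance M (\<lambda>\<omega>. \<Sum>l\<in>L. released y h \<eta> l \<omega>) \<le> real m * (2 * \<Delta>\<^sup>2 / \<epsilon>\<^sup>2)"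
    if "dyadic_decomposable h m {a - 1 ..< a - 1 + n}" for m
    using unbiased_estimator_of_dyadic_decomposition[OF assms(6-8) _ \<open>a \<ge> 1\<close> that] assms(2,3)
    by simp
  have small: "dyadic_decomposable h (0 + 2 * g) {a - 1 ..< a - 1 + n}" if "n \<le> 2 ^ h div 2"
    using that by (intro dyadic_decomposable_interval g) (simp add: half)
  have large: "dyadic_decomposable h (k + 2 * g) {a - 1 ..< a - 1 + n}"
    if "n = k * (2 ^ h div 2) + R" and "R < 2 ^ h div 2" for k R :: nat
    using that by (intro dyadic_decomposable_interval g) (simp add: half)
  show ?thesis
    unfolding levels using estimator[OF small] estimator[OF large] by auto
qed

end
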